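(* Let $S$ be a numerical semigroup, let $u\in\mathrm U(\mathrm{Betti}(S))$ and let $\Lambda=\{b\in\mathrm{Betti}(S): b\le_S u\}$. Let $s\in S\setminus\Lambda$ be such that $u\le_S b$ for every $b\in\mathrm{Betti}(S)\setminus\Lambda$ with $b\le_S s$. Then the subgraph of $\nabla_s$ induced on the vertex set $\mathrm B(s;\Lambda)$ is connected.
   Context: A numerical semigroup $S$ is a submonoid of $(\mathbb N,+)$ with finite complement, minimally generated by $\{n_1,\dots,n_e\}$. Write $a\le_S b$ if $b-a\in S$. Let $\varphi:\mathbb N^e\to S$, $\varphi(a)=\sum_ia_in_i$; $\mathrm Z(s)=\varphi^{-1}(s)$. $\nabla_s$ is the graph on $\mathrm Z(s)$ with distinct $x,y$ adjacent iff $x\cdot y\ne0$; $s$ is a Betti element if $\nabla_s$ is disconnected; $\mathrm{Betti}(S)$ is the set of Betti elements. For a poset $(X,\le)$, $\mathrm U(X)=\{x\in X: \{y\in X:y\le x\}\text{ is totally ordered}\}$; here $X=(\mathrm{Betti}(S),\le_S)$. A factorization $z\in\mathrm Z(s)$ is isolated if $z\cdot x=0$ for all $x\in\mathrm Z(s)\setminus\{z\}$; $\mathrm I(t)$ is the set of isolated factorizations of $t$ and $\mathrm I(\Lambda)=\bigcup_{t\in\Lambda}\mathrm I(t)$. $\mathrm I_s(S)$ is the set of $z\in\mathbb N^e$ such that $\varphi(z)$ has exactly one factorization. For $\Lambda\subseteq S$, $\mathrm B(s;\Lambda)=\{w+x_1+\cdots+x_l\in\mathrm Z(s): w\in\mathrm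 I_s(S),\ l\ge0,\ x_1,\dots,x_l\in\mathrm I(\Lambda)\}$. *)

theory Defs
  imports Main
begin

definition numerical_semigroup :: "nat set \<Rightarrow> bool" where
  "numerical_semigroup S \<longleftrightarrow> 0 \<in> S \<and> (\<forall>a\<in>S. \<forall>b\<in>S. a + b \<in> S) \<and> finite (UNIV - S)"

definition minimal_generators :: "nat set \<Rightarrow> nat list \<Rightarrow> bool" where
  "minimal_generators S ns \<longleftrightarrow> distinct ns \<and>
     set ns = {x \<in> S. x \<noteq> 0 \<and> \<not> (\<exists>a\<in>S. \<exists>b\<in>S. a \<noteq> 0 \<and> b \<noteq> 0 \<and> x = a + b)}"

definition leS :: "nat set \<Rightarrow> nat \<Rightarrow> nat \<Rightarrow> bool" where
  "leS S a b \<longleftrightarrow> a \<le> b \<and> b - a \<in> S"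

(* N^e, represented as functions nat => nat supported on {..<e}, e = length ns *)
definition vecs :: "nat list \<Rightarrow> (nat \<Rightarrow> nat) set" where
  "vecs ns = {z. \<forall>i\<ge>length ns. z i = 0}"

definition phi :: "nat list \<Rightarrow> (nat \<Rightarrow> nat) \<Rightarrow> nat" where
  "phi ns z = (\<Sum>i<length ns. z i * ns ! i)"

definition dot :: "nat list \<Rightarrow> (nat \<Rightarrow> nat) \<Rightarrow> (nat \<Rightarrow> nat) \<Rightarrow> nat" where
  "dot ns x y = (\<Sum>i<length ns. x i * y i)"

definition Z :: "nat list \<Rightarrow> nat \<Rightarrow> (nat \<Rightarrow> nat) set" where
  "Z ns s = {z \<in> vecs ns. phi ns z = s}"

(* the subgraph of nabla_s induced on V (V a subset of Z(s)) is connected: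
   any two vertices of V are joined by a path inside V whose consecutive
   vertices are distinct with nonzero dot product *)
definition nabla_connected_on :: "nat list \<Rightarrow> (nat \<Rightarrow> nat) set \<Rightarrow> bool" where
  "nabla_connected_on ns V \<longleftrightarrow>
     (\<forall>x\<in>V. \<forall>y\<in>V. (x, y) \<in> {(a, b). a \<in> V \<and> b \<in> V \<and> a \<noteq> b \<and> dot ns a b \<noteq> 0}\<^sup>*)"

definition Betti :: "nat list \<Rightarrow> nat set \<Rightarrow> nat set" where
  "Betti ns S = {s \<in> S. \<not> nabla_connected_on ns (Z ns s)}"

definition U :: "nat set \<Rightarrow> nat set \<Rightarrow> nat set" where
  "U S X = {x \<in> X. \<forall>a\<in>{y \<in> X. leS S y x}. \<forall>b\<in>{y \<in> X. leS S y x}. leS S a b \<or> leS S b a}"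

definition isolated :: "nat list \<Rightarrow> nat \<Rightarrow> (nat \<Rightarrow> nat) set" where
  "isolated ns t = {z \<in> Z ns t. \<forall>x\<in>Z ns t - {z}. dot ns z x = 0}"

definition isolated_set :: "nat list \<Rightarrow> nat set \<Rightarrow> (nat \<Rightarrow> nat) set" where
  "isolated_set ns L = (\<Union>t\<in>L. isolated ns t)"

definition Is :: "nat list \<Rightarrow> (nat \<Rightarrow> nat) set" where
  "Is ns = {z \<in> vecs ns. \<exists>!x. x \<in> Z ns (phi ns z)}"

definition Bset :: "nat list \<Rightarrow> nat \<Rightarrow> nat set \<Rightarrow> (nat \<Rightarrow> nat) set" where
  "Bset ns s L = {v \<in> Z ns s. \<exists>w\<in>Is ns. \<exists>xs. set xs \<subseteq> isolated_set ns L \<and>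
                      v = (\<lambda>i. w i + (\<Sum>x\<leftarrow>xs. x i))}"

end

theory Submission
  imports Defs "HOL-Library.Function_Algebras"
begin

text \<open>A vector $m \notin I_s(S)$ all of whose proper subvectors lie in $I_s(S)$ is an isolated
  factorization of a Betti element; peeling off such pieces shows that a vector $y$ all of whose
  minimal pieces lie over $\Lambda$ belongs to $B(\varphi(y);\Lambda)$. Two elements $z = x + r$ and
  $z' = x' + r'$ of $B(s;\Lambda)$ with disjoint supports, where $x, x'$ are isolated factorizations
  of $t, t' \in \Lambda$, then have a common neighbour in $B(s;\Lambda)$: $x + x' + p$ if
  $t + t' \le_S s$, and otherwise ($\Lambda$ being a chain, say $t \le_S t'$) $x + q + r'$ with
  $\varphi(q) = t' - t$. In the latter case no Betti element outside $\Lambda$ lies below $s - t$,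
  since it would lie above $u \ge_S t'$ and force $t + t' \le_S s$.\<close>

lemma sum_list_fun_apply: "sum_list fs i = (\<Sum>f\<leftarrow>fs. f i)"
  by (induction fs) auto

lemma phi_add: "phi ns (a + b) = phi ns a + phi ns b"
  by (simp add: phi_def sum.distrib distrib_right)

lemma add_diff_fun_cancel: "(m :: 'a \<Rightarrow> nat) \<le> y \<Longrightarrow> m + (y - m) = y"
  by (simp add: fun_eq_iff le_fun_def)

lemma phi_zero: "phi ns 0 = 0"
  by (simp add: phi_def)

lemma phi_diff: "m \<le> y \<Longrightarrow> phi ns y = phi ns m + phi ns (y - m)"
  using phi_add[of ns m "y - m"] by (simp add: add_diff_fun_cancel)

lemma phi_unit: "i < length ns \<Longrightarrow> phi ns (0(i := 1)) = ns ! i"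
proof -
  assume "i < length ns"
  have "phi ns (0(i := 1)) = (\<Sum>k<length ns. if k = i then ns ! k else 0)"
    unfolding phi_def by (intro sum.cong) auto
  then show ?thesis using \<open>i < length ns\<close> by simp
qed

lemma unit_in_vecs: "i < length ns \<Longrightarrow> 0(i := 1) \<in> vecs ns"
  by (simp add: vecs_def)

lemma vecs_add: "a \<in> vecs ns \<Longrightarrow> b \<in> vecs ns \<Longrightarrow> a + b \<in> vecs ns"
  by (simp add: vecs_def)

lemma vecs_diff: "a \<in> vecs ns \<Longrightarrow> a - b \<in> vecs ns"
  by (simp add: vecs_def)

lemma vecs_nonzero_index: "z \<in> vecs ns \<Longrightarrow> z i \<noteq> 0 \<Longrightarrow> i < length ns"
  unfolding vecs_def using not_less by auto

lemma zero_in_vecs: "0 \<in> vecs ns"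
  by (simp add: vecs_def)

lemma dot_neq_0_iff: "dot ns a b \<noteq> 0 \<longleftrightarrow> (\<exists>i<length ns. a i \<noteq> 0 \<and> b i \<noteq> 0)"
  by (auto simp: dot_def)

lemma dot_neq_0_if_common_below:
  assumes "a \<in> vecs ns" "a \<noteq> 0" "a \<le> x" "a \<le> y"
  shows "dot ns x y \<noteq> 0"
proof -
  obtain i where "a i \<noteq> 0" using assms(2) by (auto simp: fun_eq_iff)
  moreover have "i < length ns" using assms(1) \<open>a i \<noteq> 0\<close> by (rule vecs_nonzero_index)
  moreover have "x i \<noteq> 0" "y i \<noteq> 0"
    using assms(3,4) \<open>a i \<noteq> 0\<close> by (metis le_fun_def le_zero_eq)+
  ultimately show ?thesis unfolding dot_neq_0_iff by blast
qed

lemma sum_less_if_vecs_less: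
  assumes "m \<in> vecs ns" "y \<in> vecs ns" "m < y"
  shows "(\<Sum>i<length ns. m i) < (\<Sum>i<length ns. y i)"
proof -
  obtain j where j: "m j < y j" using assms(3) by (auto simp: less_fun_def le_fun_def not_le)
  then have "j < length ns" using assms(2) by (intro vecs_nonzero_index) auto
  then show ?thesis
    using assms(3) j by (intro sum_strict_mono_ex1) (auto simp: less_fun_def le_fun_def)
qed

lemma Is_imp_Z_eq: "z \<in> Is ns \<Longrightarrow> Z ns (phi ns z) = {z}"
  unfolding Is_def Z_def by blast

lemma Z_two_imp_not_Is: "z \<in> Z ns s \<Longrightarrow> z' \<in> Z ns s \<Longrightarrow> z \<noteq> z' \<Longrightarrow> z \<notin> Is ns"
  using Is_imp_Z_eq[of z ns] by (auto simp: Z_def)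

lemma isolated_subset_Z: "isolated ns t \<subseteq> Z ns t"
  by (auto simp: isolated_def)

lemma Bset_iff:
  "v \<in> Bset ns s L \<longleftrightarrow>
     v \<in> Z ns s \<and> (\<exists>w\<in>Is ns. \<exists>xs. set xs \<subseteq> isolated_set ns L \<and> v = w + sum_list xs)"
  by (simp add: Bset_def plus_fun_def sum_list_fun_apply)

lemma Is_in_Bset: "w \<in> Is ns \<Longrightarrow> w \<in> Bset ns (phi ns w) L"
  unfolding Bset_iff by (auto simp: Z_def Is_def intro!: bexI[of _ w] exI[of _ "[]"])

lemma isolated_add_Bset:
  assumes "x \<in> isolated_set ns L" "y \<in> Bset ns a L"
  shows "x + y \<in> Bset ns (phi ns x + a) L"
proof -
  obtain w xs where w: "w \<in> Is ns" "set xs \<subseteq> isolated_set ns L" "y = w + sum_list xs"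
    and y: "y \<in> Z ns a" using assms(2) unfolding Bset_iff by blast
  have "x \<in> vecs ns" using assms(1) by (auto simp: isolated_set_def isolated_def Z_def)
  then have "x + y \<in> Z ns (phi ns x + a)" using y by (simp add: Z_def phi_add vecs_add)
  moreover have "x + y = w + sum_list (x # xs)" using w(3) by (simp add: add_ac)
  ultimately show ?thesis using w(1,2) assms(1) unfolding Bset_iff
    by (intro conjI bexI[of _ w] exI[of _ "x # xs"]) auto
qed

lemma Bset_decompose:
  assumes "z \<in> Bset ns s L" "z \<notin> Is ns"
  obtains t x where "t \<in> L" "x \<in> isolated ns t" "x \<le> z"
proof -
  obtain w xs where w: "w \<in> Is ns" "set xs \<subseteq> isolated_set ns L" "z = w + sum_list xs"
    using assms(1) unfolding Bset_iff by blast
  obtain x xs' where "xs = x # xs'" using assms(2) w by (cases xs) auto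
  then have "x \<in> isolated_set ns L" "x \<le> z" using w by (auto simp: le_fun_def)
  then show ?thesis using that unfolding isolated_set_def by blast
qed

lemma nabla_path_via_common_neighbour:
  assumes "z \<in> V" "z' \<in> V" "v \<in> V" "dot ns z z' = 0" "dot ns z v \<noteq> 0" "dot ns v z' \<noteq> 0"
  shows "(z, z') \<in> {(a, b). a \<in> V \<and> b \<in> V \<and> a \<noteq> b \<and> dot ns a b \<noteq> 0}\<^sup>*"
proof -
  have "v \<noteq> z" "v \<noteq> z'" using assms(4-6) by auto
  then show ?thesis using assms(1-3,5,6) by (intro rtrancl_into_rtrancl[OF r_into_rtrancl]) auto
qed

lemma isolated_imp_not_connected:
  assumes "m \<in> isolated ns t" "x \<in> Z ns t" "x \<noteq> m"
  shows "\<not> nabla_connected_on ns (Z ns t)"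
proof
  let ?E = "{(a, b). a \<in> Z ns t \<and> b \<in> Z ns t \<and> a \<noteq> b \<and> dot ns a b \<noteq> 0}"
  assume "nabla_connected_on ns (Z ns t)"
  then have "(m, x) \<in> ?E\<^sup>*" using assms unfolding nabla_connected_on_def isolated_def by blast
  then show False
  proof (cases rule: converse_rtranclE)
    case base
    then show ?thesis using assms(3) by simp
  next
    case (step y)
    then have "y \<in> Z ns t - {m}" "dot ns m y \<noteq> 0" by auto
    then show ?thesis using assms(1) by (auto simp: isolated_def)
  qed
qed

lemma Betti_disjoint_Is:
  assumes "t \<in> Betti ns S" "x \<in> Z ns t"
  shows "x \<notin> Is ns"
proof
  assume "x \<in> Is ns"
  then have "Z ns t = {x}" using Is_imp_Z_eq[of x ns] assms(2) by (simp add: Z_def)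
  then have "nabla_connected_on ns (Z ns t)" by (simp add: nabla_connected_on_def)
  then show False using assms(1) by (simp add: Betti_def)
qed

definition min_not_Is :: "nat list \<Rightarrow> (nat \<Rightarrow> nat) \<Rightarrow> bool" where
  "min_not_Is ns m \<longleftrightarrow> m \<in> vecs ns \<and> m \<notin> Is ns \<and> (\<forall>m'\<in>vecs ns. m' < m \<longrightarrow> m' \<in> Is ns)"

lemma min_not_Is_exists:
  assumes "y \<in> vecs ns" "y \<notin> Is ns"
  obtains m where "m \<le> y" "min_not_Is ns m"
  using assms
proof (induction "\<Sum>i<length ns. y i" arbitrary: y thesis rule: less_induct)
  case less
  show ?case
  proof (cases "min_not_Is ns y")
    case True
    then show ?thesis using less.prems(1) by blast
  next
    case False
    then obtain y' where y': "y' \<in> vecs ns" "y' < y" "y' \<notin> Is ns"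
      using less.prems(2,3) unfolding min_not_Is_def by blast
    then have "(\<Sum>i<length ns. y' i) < (\<Sum>i<length ns. y i)"
      using less.prems(2) by (intro sum_less_if_vecs_less)
    then obtain m where "m \<le> y'" "min_not_Is ns m" using less.hyps y'(1,3) by blast
    then show ?thesis using less.prems(1) y'(2) by (meson less_imp_le order_trans)
  qed
qed

text \<open>Two factorizations of the same element sharing a generator $i$ would, after removing
  one copy of $n_i$ from both, give a smaller vector with two factorizations.\<close>
lemma min_not_Is_isolated:
  assumes "min_not_Is ns m"
  shows "m \<in> isolated ns (phi ns m)"
proof -
  have m: "m \<in> vecs ns" "\<forall>m'\<in>vecs ns. m' < m \<longrightarrow> m' \<in> Is ns"
    using assms unfolding min_not_Is_def by auto
  have "dot ns m x = 0" if x: "x \<in> Z ns (phi ns m)" "x \<noteq> m" for x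
  proof (rule ccontr)
    assume "dot ns m x \<noteq> 0"
    then obtain i where i: "i < length ns" "m i \<noteq> 0" "x i \<noteq> 0" using dot_neq_0_iff by blast
    define e where "e = (0 :: nat \<Rightarrow> nat)(i := 1)"
    have e: "e \<le> m" "e \<le> x" using i by (auto simp: e_def le_fun_def)
    have "m - e \<le> m" "(m - e) i \<noteq> m i" using i(2) by (auto simp: le_fun_def e_def)
    then have "m - e < m" by (metis order.strict_iff_order)
    then have "m - e \<in> Is ns" using m vecs_diff by blast
    moreover have "x - e \<in> Z ns (phi ns (m - e))"
      using x e phi_diff[of e m ns] phi_diff[of e x ns] by (simp add: Z_def vecs_diff)
    ultimately have "x - e = m - e" using Is_imp_Z_eq by blast
    then have "x = m" using e(1,2) add_diff_fun_cancel by metis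
    then show False using x(2) by simp
  qed
  then show ?thesis unfolding isolated_def Z_def using m(1) by auto
qed

lemma numerical_semigroup_add: "numerical_semigroup S \<Longrightarrow> a \<in> S \<Longrightarrow> b \<in> S \<Longrightarrow> a + b \<in> S"
  by (simp add: numerical_semigroup_def)

lemma numerical_semigroup_sum:
  assumes "numerical_semigroup S" "finite A" "\<And>i. i \<in> A \<Longrightarrow> f i \<in> S"
  shows "sum f A \<in> S"
  using assms(2,3)
proof (induction A rule: finite_induct)
  case empty
  then show ?case using assms(1) by (simp add: numerical_semigroup_def)
next
  case (insert i A)
  then show ?case using assms(1) by (simp add: numerical_semigroup_add)
qed

lemma numerical_semigroup_mult: "numerical_semigroup S \<Longrightarrow> a \<in> S \<Longrightarrow> k * a \<in> S"
  using numerical_semigroup_sum[of S "{..<k}" "\<lambda>_. a"] by simp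

lemma leS_trans: "numerical_semigroup S \<Longrightarrow> leS S a b \<Longrightarrow> leS S b c \<Longrightarrow> leS S a c"
  unfolding leS_def using numerical_semigroup_add[of S "c - b" "b - a"] by auto

locale minimally_generated =
  fixes S :: "nat set" and ns :: "nat list"
  assumes numerical_semigroup: "numerical_semigroup S"
    and minimal_generators: "minimal_generators S ns"
begin

lemma generators_in_S: "set ns \<subseteq> S"
  using minimal_generators by (auto simp: minimal_generators_def)

lemma generators_pos: "i < length ns \<Longrightarrow> 0 < ns ! i"
  using minimal_generators nth_mem[of i ns] by (simp add: minimal_generators_def)

lemma phi_in_S: "phi ns z \<in> S"
  unfolding phi_def
proof (rule numerical_semigroup_sum[OF numerical_semigroup])
  fix i assume "i \<in> {..<length ns}"
  then have "ns ! i \<in> S" using generators_in_S by auto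
  then show "z i * ns ! i \<in> S" using numerical_semigroup_mult[OF numerical_semigroup] by blast
qed simp

lemma leS_phi: "m \<le> y \<Longrightarrow> leS S (phi ns m) (phi ns y)"
  using phi_diff[of m y ns] phi_in_S by (simp add: leS_def)

lemma phi_eq_0_iff:
  assumes "z \<in> vecs ns"
  shows "phi ns z = 0 \<longleftrightarrow> z = 0"
proof
  assume phi: "phi ns z = 0"
  have "z i = 0" for i
  proof (cases "i < length ns")
    case True
    then have "z i * ns ! i = 0" using phi by (simp add: phi_def)
    then show ?thesis using generators_pos[OF True] by simp
  next
    case False
    then show ?thesis using assms by (simp add: vecs_def)
  qed
  then show "z = 0" by (simp add: fun_eq_iff)
qed (simp add: phi_zero)

lemma zero_in_Is: "0 \<in> Is ns"
proof -
  have "x = 0" if "x \<in> Z ns 0" for x using that phi_eq_0_iff[of x] by (simp add: Z_def)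
  then have "Z ns 0 = {0}" using zero_in_vecs[of ns] by (auto simp: Z_def phi_zero)
  then show ?thesis by (simp add: Is_def zero_in_vecs phi_zero)
qed

lemma Z_nonempty: "c \<in> S \<Longrightarrow> Z ns c \<noteq> {}"
proof (induction c rule: less_induct)
  case (less c)
  consider "c = 0" | j where "j < length ns" "c = ns ! j"
    | a b where "a \<in> S" "b \<in> S" "a \<noteq> 0" "b \<noteq> 0" "c = a + b"
  proof -
    have "c = 0 \<or> c \<in> set ns \<or> (\<exists>a\<in>S. \<exists>b\<in>S. a \<noteq> 0 \<and> b \<noteq> 0 \<and> c = a + b)"
      using less.prems minimal_generators unfolding minimal_generators_def by blast
    then show ?thesis using that in_set_conv_nth[of c ns] by blast
  qed
  then show ?case
  proof cases
    case 1
    then have "0 \<in> Z ns c" using zero_in_vecs[of ns] by (simp add: Z_def phi_zero)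
    then show ?thesis by blast
  next
    case 2
    then have "0(j := 1) \<in> Z ns c" using phi_unit unit_in_vecs by (simp add: Z_def)
    then show ?thesis by blast
  next
    case 3
    then have "Z ns a \<noteq> {}" "Z ns b \<noteq> {}" using less.IH by simp_all
    then obtain za zb where "za \<in> Z ns a" "zb \<in> Z ns b" by blast
    then have "za + zb \<in> Z ns c" using 3 by (simp add: Z_def phi_add vecs_add)
    then show ?thesis by blast
  qed
qed

lemma min_not_Is_Betti:
  assumes "min_not_Is ns m"
  shows "phi ns m \<in> Betti ns S"
proof -
  have "m \<in> vecs ns" "m \<notin> Is ns" using assms by (auto simp: min_not_Is_def)
  then obtain x where "x \<in> Z ns (phi ns m)" "x \<noteq> m" by (auto simp: Is_def Z_def)
  then show ?thesis
    using isolated_imp_not_connected[OF min_not_Is_isolated[OF assms]] phi_in_S by (simp add: Betti_def)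
qed

lemma min_not_Is_phi_pos: "min_not_Is ns m \<Longrightarrow> 0 < phi ns m"
  using phi_eq_0_iff zero_in_Is by (auto simp: min_not_Is_def)

lemma in_Bset_if_minimal_parts_in:
  assumes "y \<in> vecs ns" "\<And>m. m \<le> y \<Longrightarrow> min_not_Is ns m \<Longrightarrow> phi ns m \<in> L"
  shows "y \<in> Bset ns (phi ns y) L"
  using assms
proof (induction "phi ns y" arbitrary: y rule: less_induct)
  case less
  show ?case
  proof (cases "y \<in> Is ns")
    case True
    then show ?thesis by (rule Is_in_Bset)
  next
    case False
    then obtain m where m: "m \<le> y" "min_not_Is ns m" using min_not_Is_exists less.prems(1) by blast
    have "m \<in> isolated_set ns L"
      using min_not_Is_isolated[OF m(2)] less.prems(2)[OF m] by (auto simp: isolated_set_def)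
    moreover have "y - m \<in> Bset ns (phi ns (y - m)) L"
    proof (rule less.hyps)
      show "phi ns (y - m) < phi ns y" using phi_diff[OF m(1)] min_not_Is_phi_pos[OF m(2)] by simp
      have "y - m \<le> y" by (simp add: le_fun_def)
      then show "\<And>m'. m' \<le> y - m \<Longrightarrow> min_not_Is ns m' \<Longrightarrow> phi ns m' \<in> L"
        using less.prems(2) order_trans by blast
    qed (use less.prems(1) vecs_diff in auto)
    ultimately show ?thesis
      using isolated_add_Bset phi_diff[OF m(1)] add_diff_fun_cancel[OF m(1)] by metis
  qed
qed

end

locale Betti_lower_chain = minimally_generated +
  fixes u :: nat and L :: "nat set"
  assumes u_in_U: "u \<in> U S (Betti ns S)"
    and L_eq: "L = {b \<in> Betti ns S. leS S b u}"
begin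

definition Betti_below_in_L_or_above_u :: "nat \<Rightarrow> bool" where
  "Betti_below_in_L_or_above_u a \<longleftrightarrow> (\<forall>b\<in>Betti ns S - L. leS S b a \<longrightarrow> leS S u b)"

lemma Betti_below_in_L_or_above_u_downward:
  "Betti_below_in_L_or_above_u a \<Longrightarrow> leS S a' a \<Longrightarrow> Betti_below_in_L_or_above_u a'"
  unfolding Betti_below_in_L_or_above_u_def using leS_trans[OF numerical_semigroup] by blast

lemma L_chain: "t \<in> L \<Longrightarrow> t' \<in> L \<Longrightarrow> leS S t t' \<or> leS S t' t"
  using u_in_U L_eq unfolding U_def by auto

lemma Z_subset_Bset:
  assumes "Betti_below_in_L_or_above_u a" "\<not> leS S u a"
  shows "Z ns a \<subseteq> Bset ns a L"
proof
  fix y assume y: "y \<in> Z ns a"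
  have "phi ns m \<in> L" if m: "m \<le> y" "min_not_Is ns m" for m
  proof (rule ccontr)
    assume "phi ns m \<notin> L"
    moreover have "leS S (phi ns m) a" using leS_phi[OF m(1)] y by (simp add: Z_def)
    ultimately have "leS S u (phi ns m)"
      using assms(1) min_not_Is_Betti[OF m(2)] unfolding Betti_below_in_L_or_above_u_def by blast
    then show False using assms(2) leS_trans[OF numerical_semigroup] \<open>leS S (phi ns m) a\<close> by blast
  qed
  then show "y \<in> Bset ns a L" using in_Bset_if_minimal_parts_in[of y L] y by (simp add: Z_def)
qed

lemma Bset_nonempty:
  assumes "a \<in> S" "Betti_below_in_L_or_above_u a"
  shows "Bset ns a L \<noteq> {}"
  using assms
proof (induction a rule: less_induct)
  case (less a)
  show ?case
  proof (cases "leS S u a")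
    case False
    then show ?thesis using Z_subset_Bset less.prems Z_nonempty by blast
  next
    case True
    have u: "u \<in> Betti ns S" using u_in_U by (simp add: U_def)
    then obtain f where f: "f \<in> Z ns u" using Z_nonempty by (auto simp: Betti_def)
    moreover have "f \<notin> Is ns" using Betti_disjoint_Is[OF u f] .
    ultimately obtain m where m: "m \<le> f" "min_not_Is ns m"
      using min_not_Is_exists by (auto simp: Z_def)
    have "leS S (phi ns m) u" using leS_phi[OF m(1)] f by (simp add: Z_def)
    then have mL: "phi ns m \<in> L" and ma: "leS S (phi ns m) a"
      using L_eq min_not_Is_Betti[OF m(2)] leS_trans[OF numerical_semigroup _ True] by auto
    define a' where "a' = a - phi ns m"
    have "a' < a" "a' \<in> S" "leS S a' a"
      using min_not_Is_phi_pos[OF m(2)] ma phi_in_S by (auto simp: a'_def leS_def)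
    then obtain p where "p \<in> Bset ns a' L"
      using less.IH less.prems(2) Betti_below_in_L_or_above_u_downward by blast
    moreover have "m \<in> isolated_set ns L"
      using min_not_Is_isolated[OF m(2)] mL by (auto simp: isolated_set_def)
    ultimately have "m + p \<in> Bset ns (phi ns m + a') L" using isolated_add_Bset by blast
    moreover have "phi ns m + a' = a" using ma by (simp add: a'_def leS_def)
    ultimately show ?thesis by auto
  qed
qed

lemma Bset_split:
  assumes "s \<notin> L" "z \<in> Bset ns s L" "z \<notin> Is ns"
  obtains t x where "t \<in> L" "x \<in> isolated ns t" "x \<le> z" "leS S t s" "x \<noteq> 0" "z - x \<noteq> 0"
proof -
  obtain t x where x: "t \<in> L" "x \<in> isolated ns t" "x \<le> z"
    using Bset_decompose assms(2,3) by blast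
  have xZ: "x \<in> Z ns t" and zZ: "z \<in> Z ns s"
    using x(2) isolated_subset_Z assms(2) by (auto simp: Bset_iff)
  then have "x \<noteq> 0" using Betti_disjoint_Is zero_in_Is x(1) L_eq by blast
  moreover have "z - x \<noteq> 0"
  proof
    assume "z - x = 0"
    then have "s = t" using phi_diff[OF x(3)] xZ zZ by (simp add: Z_def phi_zero)
    then show False using x(1) assms(1) by simp
  qed
  moreover have "leS S t s" using leS_phi[OF x(3)] xZ zZ by (simp add: Z_def)
  ultimately show ?thesis using that x by blast
qed

lemma Bset_above_two_isolated:
  assumes "Betti_below_in_L_or_above_u s" "t \<in> L" "t' \<in> L" "x \<in> isolated ns t" "x' \<in> isolated ns t'"
    and "leS S (t + t') s"
  obtains v where "v \<in> Bset ns s L" "x \<le> v" "x' \<le> v"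
proof -
  define a where "a = s - (t + t')"
  have "t + t' \<in> S" using assms(2,3) L_eq numerical_semigroup_add[OF numerical_semigroup]
    by (auto simp: Betti_def)
  then have "a \<in> S" "leS S a s" using assms(6) by (auto simp: a_def leS_def)
  then obtain p where p: "p \<in> Bset ns a L"
    using Bset_nonempty Betti_below_in_L_or_above_u_downward assms(1) by blast
  have "x \<in> isolated_set ns L" "x' \<in> isolated_set ns L"
    using assms(2-5) by (auto simp: isolated_set_def)
  then have "x + (x' + p) \<in> Bset ns (phi ns x + (phi ns x' + a)) L"
    using isolated_add_Bset p by blast
  moreover have "phi ns x = t" "phi ns x' = t'" using assms(4,5) isolated_subset_Z by (auto simp: Z_def)
  then have "phi ns x + (phi ns x' + a) = s" using assms(6) by (simp add: a_def leS_def)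
  moreover have "x \<le> x + (x' + p)" "x' \<le> x + (x' + p)" by (simp_all add: le_fun_def)
  ultimately show ?thesis using that by auto
qed

lemma Bset_above_isolated_and_complement:
  assumes "Betti_below_in_L_or_above_u s" "t \<in> L" "t' \<in> L" "x \<in> isolated ns t" "x' \<in> isolated ns t'"
    and "leS S t t'" "leS S t s" "\<not> leS S (t + t') s" "z' \<in> Z ns s" "x' \<le> z'"
  obtains v where "v \<in> Bset ns s L" "x \<le> v" "z' - x' \<le> v"
proof -
  have tx: "phi ns x = t" "phi ns x' = t'" using assms(4,5) isolated_subset_Z by (auto simp: Z_def)
  obtain q where q: "q \<in> Z ns (t' - t)" using Z_nonempty assms(6) by (auto simp: leS_def)
  define y where "y = q + (z' - x')"
  have "phi ns z' = t' + phi ns (z' - x')" using phi_diff[OF assms(10)] tx by simp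
  then have "y \<in> Z ns (s - t)"
    using q assms(6,9) vecs_add vecs_diff by (auto simp: y_def Z_def phi_add leS_def)
  moreover have "t \<in> S" using assms(2) L_eq by (simp add: Betti_def)
  then have "Betti_below_in_L_or_above_u (s - t)"
    using Betti_below_in_L_or_above_u_downward[OF assms(1)] assms(7) by (simp add: leS_def)
  moreover have "\<not> leS S u (s - t)"
  proof
    assume "leS S u (s - t)"
    then have "leS S t' (s - t)" using leS_trans[OF numerical_semigroup] assms(3) L_eq by auto
    then show False using assms(7,8) by (auto simp: leS_def diff_diff_left add.commute)
  qed
  ultimately have "y \<in> Bset ns (s - t) L" using Z_subset_Bset by blast
  moreover have "x \<in> isolated_set ns L" using assms(2,4) by (auto simp: isolated_set_def)
  ultimately have "x + y \<in> Bset ns (phi ns x + (s - t)) L" using isolated_add_Bset by blast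
  moreover have "phi ns x + (s - t) = s" using tx assms(7) by (simp add: leS_def)
  moreover have "x \<le> x + y" "z' - x' \<le> x + y" by (simp_all add: y_def le_fun_def)
  ultimately show ?thesis using that by auto
qed

lemma Bset_common_neighbour:
  assumes "s \<notin> L" "Betti_below_in_L_or_above_u s" "z \<in> Bset ns s L" "z' \<in> Bset ns s L" "z \<noteq> z'"
  obtains v where "v \<in> Bset ns s L" "dot ns z v \<noteq> 0" "dot ns v z' \<noteq> 0"
proof -
  have Z: "z \<in> Z ns s" "z' \<in> Z ns s" using assms(3,4) by (simp_all add: Bset_iff)
  then have "z \<notin> Is ns" "z' \<notin> Is ns" using Z_two_imp_not_Is assms(5) by metis+
  then obtain t x t' x' where
    x: "t \<in> L" "x \<in> isolated ns t" "x \<le> z" "leS S t s" "x \<noteq> 0" "z - x \<noteq> 0" and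
    x': "t' \<in> L" "x' \<in> isolated ns t'" "x' \<le> z'" "leS S t' s" "x' \<noteq> 0" "z' - x' \<noteq> 0"
    using Bset_split assms(1,3,4) by metis
  have vecs: "x \<in> vecs ns" "x' \<in> vecs ns" "z - x \<in> vecs ns" "z' - x' \<in> vecs ns"
    using x(2) x'(2) Z isolated_subset_Z vecs_diff by (auto simp: Z_def)
  have below: "z - x \<le> z" "z' - x' \<le> z'" by (simp_all add: le_fun_def)
  consider "leS S (t + t') s" | "leS S t t'" "\<not> leS S (t + t') s" | "leS S t' t" "\<not> leS S (t' + t) s"
    using L_chain[OF x(1) x'(1)] by (metis add.commute)
  then show ?thesis
  proof cases
    case 1
    then obtain v where "v \<in> Bset ns s L" "x \<le> v" "x' \<le> v"
      using Bset_above_two_isolated assms(2) x x' by metis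
    then show ?thesis using that dot_neq_0_if_common_below vecs x(3,5) x'(3,5) by metis
  next
    case 2
    then obtain v where "v \<in> Bset ns s L" "x \<le> v" "z' - x' \<le> v"
      using Bset_above_isolated_and_complement assms(2) x x' Z by metis
    then show ?thesis using that dot_neq_0_if_common_below vecs x(3,5) x'(6) below by metis
  next
    case 3
    then obtain v where "v \<in> Bset ns s L" "x' \<le> v" "z - x \<le> v"
      using Bset_above_isolated_and_complement assms(2) x x' Z by metis
    then show ?thesis using that dot_neq_0_if_common_below vecs x'(3,5) x(6) below by metis
  qed
qed

end

theorem lemma5p8:
  fixes S :: "nat set" and ns :: "nat list" and u s :: nat and L :: "nat set"
  assumes "numerical_semigroup S"
    and "minimal_generators S ns"
    and "u \<in> U S (Betti ns S)"
    and "L = {b \<in> Betti ns S. leS S b u}"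
    and "s \<in> S" and "s \<notin> L"
    and "\<forall>b \<in> Betti ns S - L. leS S b s \<longrightarrow> leS S u b"
  shows "nabla_connected_on ns (Bset ns s L)"
proof -
  interpret Betti_lower_chain S ns u L
    using assms(1-4) by unfold_locales
  have cond: "Betti_below_in_L_or_above_u s"
    using assms(7) by (simp add: Betti_below_in_L_or_above_u_def)
  show ?thesis
    unfolding nabla_connected_on_def
  proof (intro ballI)
    fix z z' assume z: "z \<in> Bset ns s L" and z': "z' \<in> Bset ns s L"
    show "(z, z') \<in> {(a, b). a \<in> Bset ns s L \<and> b \<in> Bset ns s L \<and> a \<noteq> b \<and> dot ns a b \<noteq> 0}\<^sup>*"
    proof (cases "z = z' \<or> dot ns z z' \<noteq> 0")
      case True
      then show ?thesis using z z' by auto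
    next
      case False
      then obtain v where "v \<in> Bset ns s L" "dot ns z v \<noteq> 0" "dot ns v z' \<noteq> 0"
        using Bset_common_neighbour[OF assms(6) cond z z'] by blast
      then show ?thesis using nabla_path_via_common_neighbour z z' False by blast
    qed
  qed
qed

end
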